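(* Let $Q$ be a quiver (with no framing and arbitrary orientation) whose underlying graph is an affine Dynkin graph of type $\widetilde{D}_r$, $\widetilde{E}_6$, $\widetilde{E}_7$ or $\widetilde{E}_8$, let $\beta=(n,\dots,n)$, and put the complete standard filtration at each vertex. Then $\mathbb{C}[\mathfrak{b}^{\oplus Q_1}]^{\mathbb{U}_\beta}\cong\mathbb{C}[\mathfrak{t}^{\oplus Q_1}]$, i.e. the invariant ring is the subalgebra generated by the diagonal entries of the matrices $A_a$, $a\in Q_1$.
   Context: At each vertex put $\mathbb{C}^n$ with flag $0\subset\mathbb{C}^1\subset\cdots\subset\mathbb{C}^n$ (standard coordinate subspaces). Then the filtered representation space is $\mathfrak{b}^{\oplus Q_1}$, tuples $(A_a)_{a\in Q_1}$ of upper triangular $n\times n$ matrices. $\mathbb{U}_\beta=U^{Q_0}$, $U$ the upper unitriangular $n\times n$ matrices, acting by $(u_i)\cdot(A_a)=(u_{h(a)}A_au_{t(a)}^{-1})$ where $h,t$ are head and tail. $\mathfrak{t}$ denotes diagonal matrices. *)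

theory Defs
  imports Complex_Main
begin

(* n x n complex matrices are represented as nat => nat => complex, indices 0..n-1,
   canonically zero outside the index range. *)

definition sqmats :: "nat \<Rightarrow> (nat \<Rightarrow> nat \<Rightarrow> complex) set" where
  "sqmats n = {M. \<forall>i j. \<not> (i < n \<and> j < n) \<longrightarrow> M i j = 0}"

definition mmul :: "nat \<Rightarrow> (nat \<Rightarrow> nat \<Rightarrow> complex) \<Rightarrow> (nat \<Rightarrow> nat \<Rightarrow> complex) \<Rightarrow> (nat \<Rightarrow> nat \<Rightarrow> complex)" where
  "mmul n M N = (\<lambda>i j. if i < n \<and> j < n then (\<Sum>k<n. M i k * N k j) else 0)"

definition mid :: "nat \<Rightarrow> (nat \<Rightarrow> nat \<Rightarrow> complex)" where
  "mid n = (\<lambda>i j. if i < n \<and> i = j then 1 else 0)"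

definition minv :: "nat \<Rightarrow> (nat \<Rightarrow> nat \<Rightarrow> complex) \<Rightarrow> (nat \<Rightarrow> nat \<Rightarrow> complex)" where
  "minv n M = (SOME N. N \<in> sqmats n \<and> mmul n M N = mid n \<and> mmul n N M = mid n)"

definition borel :: "nat \<Rightarrow> (nat \<Rightarrow> nat \<Rightarrow> complex) set" where
  "borel n = {M \<in> sqmats n. \<forall>i j. j < i \<longrightarrow> M i j = 0}"

definition unitri :: "nat \<Rightarrow> (nat \<Rightarrow> nat \<Rightarrow> complex) set" where
  "unitri n = {M \<in> borel n. \<forall>i<n. M i i = 1}"

definition rep_space :: "'e set \<Rightarrow> nat \<Rightarrow> ('e \<Rightarrow> nat \<Rightarrow> nat \<Rightarrow> complex) set" where
  "rep_space Q1 n = {A. (\<forall>a\<in>Q1. A a \<in> borel n) \<and> (\<forall>a. a \<notin> Q1 \<longrightarrow> A a = (\<lambda>i j. 0))}"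

definition Ugrp :: "'v set \<Rightarrow> nat \<Rightarrow> ('v \<Rightarrow> nat \<Rightarrow> nat \<Rightarrow> complex) set" where
  "Ugrp Q0 n = {u. (\<forall>x\<in>Q0. u x \<in> unitri n) \<and> (\<forall>x. x \<notin> Q0 \<longrightarrow> u x = mid n)}"

definition act :: "'e set \<Rightarrow> ('e \<Rightarrow> 'v) \<Rightarrow> ('e \<Rightarrow> 'v) \<Rightarrow> nat \<Rightarrow>
    ('v \<Rightarrow> nat \<Rightarrow> nat \<Rightarrow> complex) \<Rightarrow> ('e \<Rightarrow> nat \<Rightarrow> nat \<Rightarrow> complex) \<Rightarrow> ('e \<Rightarrow> nat \<Rightarrow> nat \<Rightarrow> complex)" where
  "act Q1 h t n u A = (\<lambda>a. if a \<in> Q1 then mmul n (mmul n (u (h a)) (A a)) (minv n (u (t a))) else (\<lambda>i j. 0))"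

inductive_set polyfuns :: "('x \<Rightarrow> complex) set \<Rightarrow> ('x \<Rightarrow> complex) set" for G where
  pf_const: "(\<lambda>_. c) \<in> polyfuns G"
| pf_gen: "g \<in> G \<Longrightarrow> g \<in> polyfuns G"
| pf_add: "f \<in> polyfuns G \<Longrightarrow> g \<in> polyfuns G \<Longrightarrow> (\<lambda>x. f x + g x) \<in> polyfuns G"
| pf_mult: "f \<in> polyfuns G \<Longrightarrow> g \<in> polyfuns G \<Longrightarrow> (\<lambda>x. f x * g x) \<in> polyfuns G"

definition coords :: "'e set \<Rightarrow> nat \<Rightarrow> (('e \<Rightarrow> nat \<Rightarrow> nat \<Rightarrow> complex) \<Rightarrow> complex) set" where
  "coords Q1 n = {(\<lambda>A. A a i j) | a i j. a \<in> Q1 \<and> i \<le> j \<and> j < n}"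

definition diag_coords :: "'e set \<Rightarrow> nat \<Rightarrow> (('e \<Rightarrow> nat \<Rightarrow> nat \<Rightarrow> complex) \<Rightarrow> complex) set" where
  "diag_coords Q1 n = {(\<lambda>A. A a i i) | a i. a \<in> Q1 \<and> i < n}"

definition arm_edges :: "nat \<Rightarrow> nat \<Rightarrow> nat set set" where
  "arm_edges s l = {{0, s}} \<union> {{i, Suc i} | i. s \<le> i \<and> i + 1 < s + l}"

(* star T(p,q,s): centre 0, arms of lengths p,q,s *)
definition star_vertices :: "nat \<Rightarrow> nat \<Rightarrow> nat \<Rightarrow> nat set" where
  "star_vertices p q s = {0 .. p + q + s}"
definition star_edges :: "nat \<Rightarrow> nat \<Rightarrow> nat \<Rightarrow> nat set set" where
  "star_edges p q s = arm_edges 1 p \<union> arm_edges (p + 1) q \<union> arm_edges (p + q + 1) s"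

definition Dt_vertices :: "nat \<Rightarrow> nat set" where
  "Dt_vertices r = {0 .. r}"
definition Dt_edges :: "nat \<Rightarrow> nat set set" where
  "Dt_edges r = {{0,2}, {1,2}, {r-2, r-1}, {r-2, r}} \<union> {{i, Suc i} | i. 2 \<le> i \<and> i < r - 2}"

definition underlying_iso :: "'v set \<Rightarrow> 'e set \<Rightarrow> ('e \<Rightarrow> 'v) \<Rightarrow> ('e \<Rightarrow> 'v) \<Rightarrow> nat set \<Rightarrow> nat set set \<Rightarrow> bool" where
  "underlying_iso Q0 Q1 h t V E \<longleftrightarrow>
     (\<exists>\<phi>. bij_betw \<phi> Q0 V \<and> bij_betw (\<lambda>a. {\<phi> (t a), \<phi> (h a)}) Q1 E)"

definition affine_DE :: "'v set \<Rightarrow> 'e set \<Rightarrow> ('e \<Rightarrow> 'v) \<Rightarrow> ('e \<Rightarrow> 'v) \<Rightarrow> bool" where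
  "affine_DE Q0 Q1 h t \<longleftrightarrow>
     (\<exists>r\<ge>4. underlying_iso Q0 Q1 h t (Dt_vertices r) (Dt_edges r))
   \<or> underlying_iso Q0 Q1 h t (star_vertices 2 2 2) (star_edges 2 2 2)
   \<or> underlying_iso Q0 Q1 h t (star_vertices 1 3 3) (star_edges 1 3 3)
   \<or> underlying_iso Q0 Q1 h t (star_vertices 1 2 5) (star_edges 1 2 5)"

end

theory Submission
  imports Defs "HOL-Computational_Algebra.Polynomial"
begin

text \<open>Conjugation by unipotent upper triangular matrices preserves the diagonal of an upper
  triangular matrix, so polynomials in the diagonal entries are invariant. Conversely, on a
  forest every representation whose diagonal entries are nonzero can be gauged to its
  diagonal part: rank the vertices so that each is attached to earlier ones by at most one
  arrow, and solve for the gauge at each new vertex from that arrow. The affine Dynkin graphs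
  of types D and E are trees, so an invariant polynomial agrees with its diagonal part on
  the Zariski-dense set of such representations, hence everywhere.\<close>

section \<open>Upper triangular matrices\<close>

lemma mmul_sqmats: "mmul n A B \<in> sqmats n"
  by (auto simp: mmul_def sqmats_def)

lemma mmul_assoc: "mmul n (mmul n A B) C = mmul n A (mmul n B C)"
proof (intro ext)
  fix i j
  show "mmul n (mmul n A B) C i j = mmul n A (mmul n B C) i j"
  proof (cases "i < n \<and> j < n")
    case True
    have "(\<Sum>k<n. (\<Sum>l<n. A i l * B l k) * C k j) = (\<Sum>k<n. \<Sum>l<n. A i l * B l k * C k j)"
      by (simp add: sum_distrib_right)
    also have "\<dots> = (\<Sum>l<n. \<Sum>k<n. A i l * B l k * C k j)"
      by (rule sum.swap)
    also have "\<dots> = (\<Sum>l<n. A i l * (\<Sum>k<n. B l k * C k j))"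
      by (simp add: sum_distrib_left mult.assoc)
    finally show ?thesis
      using True by (simp add: mmul_def)
  qed (auto simp: mmul_def)
qed

lemma sum_lessThan_eq_single:
  fixes f :: "nat \<Rightarrow> 'a::comm_monoid_add"
  assumes "i < n" and "\<And>k. k < n \<Longrightarrow> k \<noteq> i \<Longrightarrow> f k = 0"
  shows "(\<Sum>k<n. f k) = f i"
proof -
  have "(\<Sum>k<n. f k) = (\<Sum>k\<in>{i}. f k)"
    by (rule sum.mono_neutral_right) (use assms in auto)
  then show ?thesis by simp
qed

lemma mmul_mid_left: "M \<in> sqmats n \<Longrightarrow> mmul n (mid n) M = M"
proof (intro ext)
  fix i j assume M: "M \<in> sqmats n"
  show "mmul n (mid n) M i j = M i j"
  proof (cases "i < n \<and> j < n")
    case True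
    have "(\<Sum>k<n. mid n i k * M k j) = mid n i i * M i j"
      by (rule sum_lessThan_eq_single) (use True in \<open>auto simp: mid_def\<close>)
    then show ?thesis
      using True by (simp add: mmul_def mid_def)
  qed (use M in \<open>auto simp: mmul_def sqmats_def\<close>)
qed

lemma mmul_mid_right: "M \<in> sqmats n \<Longrightarrow> mmul n M (mid n) = M"
proof (intro ext)
  fix i j assume M: "M \<in> sqmats n"
  show "mmul n M (mid n) i j = M i j"
  proof (cases "i < n \<and> j < n")
    case True
    have "(\<Sum>k<n. M i k * mid n k j) = M i j * mid n j j"
      by (rule sum_lessThan_eq_single) (use True in \<open>auto simp: mid_def\<close>)
    then show ?thesis
      using True by (simp add: mmul_def mid_def)
  qed (use M in \<open>auto simp: mmul_def sqmats_def\<close>)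
qed

lemma borel_sqmats: "M \<in> borel n \<Longrightarrow> M \<in> sqmats n"
  by (simp add: borel_def)

lemma borel_mmul:
  assumes "A \<in> borel n" and "B \<in> borel n"
  shows "mmul n A B \<in> borel n"
  unfolding borel_def
proof (intro CollectI conjI allI impI)
  show "mmul n A B \<in> sqmats n"
    by (rule mmul_sqmats)
  fix i j :: nat assume "j < i"
  have "A i k * B k j = 0" for k
    using assms \<open>j < i\<close> by (cases "k < i") (auto simp: borel_def)
  then have "(\<Sum>k<n. A i k * B k j) = 0"
    by (intro sum.neutral) blast
  then show "mmul n A B i j = 0"
    by (simp add: mmul_def)
qed

lemma diag_mmul_borel:
  assumes "A \<in> borel n" and "B \<in> borel n" and "i < n"
  shows "mmul n A B i i = A i i * B i i"
proof -
  have "(\<Sum>k<n. A i k * B k i) = A i i * B i i"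
  proof (rule sum_lessThan_eq_single[OF \<open>i < n\<close>])
    fix k assume "k \<noteq> i"
    then show "A i k * B k i = 0"
      using assms by (cases "k < i") (auto simp: borel_def)
  qed
  then show ?thesis
    using \<open>i < n\<close> by (simp add: mmul_def)
qed

function upper_rinv :: "nat \<Rightarrow> (nat \<Rightarrow> nat \<Rightarrow> complex) \<Rightarrow> nat \<Rightarrow> nat \<Rightarrow> complex" where
  "upper_rinv n M i j =
     (if i \<le> j \<and> j < n then
        (if i = j then 1 / M i i
         else - (\<Sum>k\<in>{i<..j}. M i k * upper_rinv n M k j) / M i i)
      else 0)"
  by auto
termination
  by (relation "measure (\<lambda>(n, M, i, j). j - i)") auto

declare upper_rinv.simps [simp del]

lemma upper_rinv_borel: "upper_rinv n M \<in> borel n"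
  by (auto simp: borel_def sqmats_def upper_rinv.simps)

lemma diag_upper_rinv: "i < n \<Longrightarrow> upper_rinv n M i i = 1 / M i i"
  by (simp add: upper_rinv.simps)

lemma mmul_upper_rinv:
  assumes M: "M \<in> borel n" and nz: "\<forall>i<n. M i i \<noteq> 0"
  shows "mmul n M (upper_rinv n M) = mid n"
proof (intro ext)
  fix i j
  show "mmul n M (upper_rinv n M) i j = mid n i j"
  proof (cases "i < n \<and> j < n")
    case False
    then show ?thesis by (auto simp: mmul_def mid_def)
  next
    case True
    let ?f = "\<lambda>k. M i k * upper_rinv n M k j"
    have "?f k = 0" if "k \<notin> {i..j}" for k
      using that M by (cases "k < i") (auto simp: borel_def upper_rinv.simps)
    then have "(\<Sum>k<n. ?f k) = (\<Sum>k\<in>{i..j}. ?f k)"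
      by (intro sum.mono_neutral_right) (use True in auto)
    also have "\<dots> = mid n i j"
    proof (cases "i \<le> j")
      case False
      then show ?thesis by (simp add: mid_def)
    next
      case le: True
      have "{i..j} = insert i {i<..j}"
        using le by auto
      then have "(\<Sum>k\<in>{i..j}. ?f k) = ?f i + (\<Sum>k\<in>{i<..j}. ?f k)"
        by simp
      also have "\<dots> = mid n i j"
        using True le nz by (cases "i = j") (simp_all add: upper_rinv.simps[of n M i j] diag_upper_rinv mid_def)
      finally show ?thesis .
    qed
    finally show ?thesis
      using True by (simp add: mmul_def)
  qed
qed

text \<open>A right inverse of the right inverse gives back \<open>M\<close>, so the right inverse is two-sided.\<close>

lemma borel_two_sided_inverse:
  assumes M: "M \<in> borel n" and nz: "\<forall>i<n. M i i \<noteq> 0"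
  obtains N where "N \<in> borel n" and "\<forall>i<n. N i i = 1 / M i i"
    and "mmul n M N = mid n" and "mmul n N M = mid n"
proof -
  let ?R = "upper_rinv n M"
  let ?R' = "upper_rinv n ?R"
  have MR: "mmul n M ?R = mid n"
    by (rule mmul_upper_rinv[OF assms])
  have RR: "mmul n ?R ?R' = mid n"
    by (rule mmul_upper_rinv) (use nz in \<open>auto simp: upper_rinv_borel diag_upper_rinv\<close>)
  have "M = mmul n M (mid n)"
    using M by (simp add: mmul_mid_right borel_sqmats)
  also have "\<dots> = mmul n (mmul n M ?R) ?R'"
    by (simp add: RR mmul_assoc)
  also have "\<dots> = ?R'"
    by (simp add: MR mmul_mid_left borel_sqmats upper_rinv_borel)
  finally have "mmul n ?R M = mid n"
    using RR by simp
  with MR show thesis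
    by (intro that[of ?R]) (auto simp: upper_rinv_borel diag_upper_rinv)
qed

lemma minv_eqI:
  assumes "N \<in> sqmats n" and "mmul n M N = mid n" and "mmul n N M = mid n"
  shows "minv n M = N"
proof -
  have inv: "minv n M \<in> sqmats n" "mmul n (minv n M) M = mid n"
    using someI[of "\<lambda>N. N \<in> sqmats n \<and> mmul n M N = mid n \<and> mmul n N M = mid n" N] assms
    unfolding minv_def by blast+
  have "minv n M = mmul n (mmul n (minv n M) M) N"
    using inv(1) by (simp add: mmul_assoc assms(2) mmul_mid_right)
  also have "\<dots> = N"
    using inv(2) assms(1) by (simp add: mmul_mid_left)
  finally show ?thesis .
qed

lemma borel_minv:
  assumes "M \<in> borel n" and "\<forall>i<n. M i i \<noteq> 0"
  shows "minv n M \<in> borel n" and "\<And>i. i < n \<Longrightarrow> minv n M i i = 1 / M i i"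
    and "mmul n M (minv n M) = mid n" and "mmul n (minv n M) M = mid n"
proof -
  obtain N where N: "N \<in> borel n" "\<forall>i<n. N i i = 1 / M i i" "mmul n M N = mid n" "mmul n N M = mid n"
    using borel_two_sided_inverse[OF assms] .
  then have "minv n M = N"
    by (intro minv_eqI) (auto simp: borel_sqmats)
  with N show "minv n M \<in> borel n" "\<And>i. i < n \<Longrightarrow> minv n M i i = 1 / M i i"
    "mmul n M (minv n M) = mid n" "mmul n (minv n M) M = mid n"
    by auto
qed

lemma unitri_iff: "u \<in> unitri n \<longleftrightarrow> u \<in> borel n \<and> (\<forall>i<n. u i i = 1)"
  by (simp add: unitri_def)

lemma mid_unitri: "mid n \<in> unitri n"
  by (auto simp: unitri_def borel_def sqmats_def mid_def)

lemma unitri_minv: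
  assumes "u \<in> unitri n"
  shows "minv n u \<in> unitri n" and "mmul n u (minv n u) = mid n"
proof -
  have "u \<in> borel n" "\<forall>i<n. u i i \<noteq> 0"
    using assms by (auto simp: unitri_def)
  from borel_minv[OF this] assms
  show "minv n u \<in> unitri n" "mmul n u (minv n u) = mid n"
    by (auto simp: unitri_def)
qed

lemma unitri_solve_left:
  assumes A: "A \<in> borel n" "\<forall>i<n. A i i \<noteq> 0"
    and D: "D \<in> borel n" "\<forall>i<n. D i i = A i i"
    and y: "y \<in> unitri n"
  shows "\<exists>x\<in>unitri n. mmul n x A = mmul n D y"
proof
  let ?x = "mmul n (mmul n D y) (minv n A)"
  note Ainv = borel_minv[OF A]
  have Dy: "mmul n D y \<in> borel n"
    using borel_mmul D(1) y by (auto simp: unitri_iff)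
  show "?x \<in> unitri n"
    using borel_mmul[OF Dy Ainv(1)] diag_mmul_borel[OF Dy Ainv(1)]
      diag_mmul_borel[OF D(1)] y A(2) D(2) Ainv(2)
    by (auto simp: unitri_iff)
  show "mmul n ?x A = mmul n D y"
    using y by (simp add: mmul_assoc Ainv(4) mmul_mid_right unitri_iff borel_sqmats)
qed

lemma unitri_solve_right:
  assumes A: "A \<in> borel n" "\<forall>i<n. A i i \<noteq> 0"
    and D: "D \<in> borel n" "\<forall>i<n. D i i = A i i"
    and x: "x \<in> unitri n"
  shows "\<exists>y\<in>unitri n. mmul n D y = mmul n x A"
proof
  let ?y = "mmul n (minv n D) (mmul n x A)"
  have "\<forall>i<n. D i i \<noteq> 0"
    using A(2) D(2) by simp
  note Dinv = borel_minv[OF D(1) this]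
  have xA: "mmul n x A \<in> borel n"
    using borel_mmul A(1) x by (auto simp: unitri_iff)
  show "?y \<in> unitri n"
    using borel_mmul[OF Dinv(1) xA] diag_mmul_borel[OF Dinv(1) xA]
      diag_mmul_borel[OF _ A(1)] x A(2) D(2) Dinv(2)
    by (auto simp: unitri_iff)
  show "mmul n D ?y = mmul n x A"
    using x by (simp add: mmul_assoc[symmetric] Dinv(3) mmul_mid_left unitri_iff borel_sqmats)
qed

section \<open>Gauging representations of a forest to their diagonal part\<close>

text \<open>Each vertex is joined to vertices of smaller rank by at most one arrow, i.e. the
  underlying graph is a forest grown by attaching one pendant vertex at a time.\<close>

definition forest_ranking :: "'e set \<Rightarrow> ('e \<Rightarrow> 'v) \<Rightarrow> ('e \<Rightarrow> 'v) \<Rightarrow> ('v \<Rightarrow> nat) \<Rightarrow> bool" where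
  "forest_ranking Q1 h t \<kappa> \<longleftrightarrow>
     (\<forall>a\<in>Q1. \<kappa> (h a) \<noteq> \<kappa> (t a)) \<and> inj_on (\<lambda>a. max (\<kappa> (h a)) (\<kappa> (t a))) Q1"

definition diag_part :: "('e \<Rightarrow> nat \<Rightarrow> nat \<Rightarrow> complex) \<Rightarrow> ('e \<Rightarrow> nat \<Rightarrow> nat \<Rightarrow> complex)" where
  "diag_part A = (\<lambda>a i j. if i = j then A a i j else 0)"

lemma diag_part_rep_space: "A \<in> rep_space Q1 n \<Longrightarrow> diag_part A \<in> rep_space Q1 n"
  by (auto simp: rep_space_def diag_part_def borel_def sqmats_def fun_eq_iff)

lemma act_rep_space_and_diag:
  assumes u: "u \<in> Ugrp Q0 n" and A: "A \<in> rep_space Q1 n" and ht: "\<forall>a\<in>Q1. h a \<in> Q0 \<and> t a \<in> Q0"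
  shows "act Q1 h t n u A \<in> rep_space Q1 n" and "\<forall>a\<in>Q1. \<forall>i<n. act Q1 h t n u A a i i = A a i i"
proof -
  have "mmul n (mmul n (u (h a)) (A a)) (minv n (u (t a))) \<in> borel n \<and>
      (\<forall>i<n. mmul n (mmul n (u (h a)) (A a)) (minv n (u (t a))) i i = A a i i)" if a: "a \<in> Q1" for a
  proof -
    have uh: "u (h a) \<in> borel n" "\<forall>i<n. u (h a) i i = 1"
      and ut: "u (t a) \<in> unitri n"
      and Aa: "A a \<in> borel n"
      using u A ht a by (auto simp: Ugrp_def rep_space_def unitri_iff)
    have mi: "minv n (u (t a)) \<in> borel n" "\<forall>i<n. minv n (u (t a)) i i = 1"
      using unitri_minv(1)[OF ut] by (auto simp: unitri_iff)
    have uA: "mmul n (u (h a)) (A a) \<in> borel n"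
      using borel_mmul[OF uh(1) Aa] .
    show ?thesis
      using borel_mmul[OF uA mi(1)] diag_mmul_borel[OF uA mi(1)] diag_mmul_borel[OF uh(1) Aa] uh(2) mi(2)
      by simp
  qed
  then show "act Q1 h t n u A \<in> rep_space Q1 n" "\<forall>a\<in>Q1. \<forall>i<n. act Q1 h t n u A a i i = A a i i"
    by (auto simp: rep_space_def act_def)
qed

text \<open>Induction on the rank: the arrow of rank \<open>k\<close> has exactly one endpoint of rank \<open>k\<close>,
  whose gauge is not yet constrained by arrows of smaller rank and is solved for.\<close>

lemma forest_gauge_below_rank:
  assumes rk: "forest_ranking Q1 h t \<kappa>"
    and A: "\<forall>a\<in>Q1. A a \<in> borel n \<and> (\<forall>i<n. A a i i \<noteq> 0)"
    and D: "\<forall>a\<in>Q1. D a \<in> borel n \<and> (\<forall>i<n. D a i i = A a i i)"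
  shows "\<exists>u. (\<forall>v. u v \<in> unitri n) \<and>
    (\<forall>a\<in>Q1. max (\<kappa> (h a)) (\<kappa> (t a)) < k \<longrightarrow> mmul n (u (h a)) (A a) = mmul n (D a) (u (t a)))"
proof (induction k)
  case 0
  show ?case
    using mid_unitri by (intro exI[of _ "\<lambda>_. mid n"]) auto
next
  case (Suc k)
  then obtain u where u: "\<forall>v. u v \<in> unitri n"
    "\<forall>a\<in>Q1. max (\<kappa> (h a)) (\<kappa> (t a)) < k \<longrightarrow> mmul n (u (h a)) (A a) = mmul n (D a) (u (t a))"
    by blast
  show ?case
  proof (cases "\<exists>a\<in>Q1. max (\<kappa> (h a)) (\<kappa> (t a)) = k")
    case False
    then show ?thesis
      using u by (intro exI[of _ u]) (auto simp: less_Suc_eq)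
  next
    case True
    then obtain a where a: "a \<in> Q1" "max (\<kappa> (h a)) (\<kappa> (t a)) = k"
      by blast
    have only_a: "b = a" if "b \<in> Q1" "max (\<kappa> (h b)) (\<kappa> (t b)) = k" for b
      using rk a that unfolding forest_ranking_def by (auto dest: inj_onD)
    have ends: "\<kappa> (h a) \<noteq> \<kappa> (t a)"
      using rk a unfolding forest_ranking_def by blast
    have "\<exists>w x. \<kappa> w = k \<and> x \<in> unitri n \<and>
        mmul n ((u(w := x)) (h a)) (A a) = mmul n (D a) ((u(w := x)) (t a))"
    proof (cases "\<kappa> (t a) < \<kappa> (h a)")
      case True
      obtain x where "x \<in> unitri n" "mmul n x (A a) = mmul n (D a) (u (t a))"
        using unitri_solve_left[where n = n and A = "A a" and D = "D a" and y = "u (t a)"] A D a u(1) by auto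
      with True a ends show ?thesis
        by (intro exI[of _ "h a"] exI[of _ x]) auto
    next
      case False
      obtain y where "y \<in> unitri n" "mmul n (D a) y = mmul n (u (h a)) (A a)"
        using unitri_solve_right[where n = n and A = "A a" and D = "D a" and x = "u (h a)"] A D a u(1) by auto
      with False a ends show ?thesis
        by (intro exI[of _ "t a"] exI[of _ y]) auto
    qed
    then obtain w x where w: "\<kappa> w = k" "x \<in> unitri n"
      "mmul n ((u(w := x)) (h a)) (A a) = mmul n (D a) ((u(w := x)) (t a))"
      by blast
    show ?thesis
    proof (intro exI[of _ "u(w := x)"] conjI ballI impI allI)
      show "(u(w := x)) v \<in> unitri n" for v
        using u(1) w(2) by simp
      fix b assume b: "b \<in> Q1" "max (\<kappa> (h b)) (\<kappa> (t b)) < Suc k"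
      show "mmul n ((u(w := x)) (h b)) (A b) = mmul n (D b) ((u(w := x)) (t b))"
      proof (cases "max (\<kappa> (h b)) (\<kappa> (t b)) = k")
        case True
        with only_a b(1) have "b = a"
          by blast
        then show ?thesis
          using w(3) by simp
      next
        case False
        with b(2) have lt: "max (\<kappa> (h b)) (\<kappa> (t b)) < k"
          by linarith
        then have "h b \<noteq> w" "t b \<noteq> w"
          using w(1) by auto
        then show ?thesis
          using u(2) b(1) lt by simp
      qed
    qed
  qed
qed

lemma forest_gauge_to_diag_part:
  assumes "finite Q1" and ht: "\<forall>a\<in>Q1. h a \<in> Q0 \<and> t a \<in> Q0"
    and rk: "forest_ranking Q1 h t \<kappa>"
    and A: "A \<in> rep_space Q1 n" and nz: "\<forall>a\<in>Q1. \<forall>i<n. A a i i \<noteq> 0"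
  shows "\<exists>u\<in>Ugrp Q0 n. act Q1 h t n u A = diag_part A"
proof -
  have "\<forall>a\<in>Q1. A a \<in> borel n \<and> (\<forall>i<n. A a i i \<noteq> 0)"
    using A nz by (auto simp: rep_space_def)
  moreover have D: "\<forall>a\<in>Q1. diag_part A a \<in> borel n \<and> (\<forall>i<n. diag_part A a i i = A a i i)"
    using diag_part_rep_space[OF A] by (auto simp: rep_space_def diag_part_def)
  ultimately obtain u where u: "\<forall>v. u v \<in> unitri n"
    "\<forall>a\<in>Q1. max (\<kappa> (h a)) (\<kappa> (t a)) < Suc (Max ((\<lambda>a. max (\<kappa> (h a)) (\<kappa> (t a))) ` Q1)) \<longrightarrow>
       mmul n (u (h a)) (A a) = mmul n (diag_part A a) (u (t a))"
    using forest_gauge_below_rank[OF rk] by blast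
  have eq: "mmul n (u (h a)) (A a) = mmul n (diag_part A a) (u (t a))" if "a \<in> Q1" for a
  proof -
    have "max (\<kappa> (h a)) (\<kappa> (t a)) \<le> Max ((\<lambda>a. max (\<kappa> (h a)) (\<kappa> (t a))) ` Q1)"
      using \<open>finite Q1\<close> that by (intro Max_ge) auto
    with u(2) that show ?thesis
      by (simp add: le_imp_less_Suc)
  qed
  define u' where "u' = (\<lambda>v. if v \<in> Q0 then u v else mid n)"
  have "u' \<in> Ugrp Q0 n"
    using u(1) by (auto simp: Ugrp_def u'_def)
  moreover have "act Q1 h t n u' A a = diag_part A a" for a
  proof (cases "a \<in> Q1")
    case False
    then show ?thesis
      using A by (auto simp: act_def diag_part_def rep_space_def fun_eq_iff)
  next
    case True
    then have "act Q1 h t n u' A a = mmul n (mmul n (u (h a)) (A a)) (minv n (u (t a)))"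
      using ht by (simp add: act_def u'_def)
    also have "\<dots> = mmul n (diag_part A a) (mmul n (u (t a)) (minv n (u (t a))))"
      using eq[OF True] by (simp add: mmul_assoc)
    also have "\<dots> = diag_part A a"
      using unitri_minv(2) u(1) D True by (simp add: mmul_mid_right borel_sqmats)
    finally show ?thesis .
  qed
  ultimately show ?thesis
    by blast
qed

section \<open>Rankings of the affine Dynkin graphs of types D and E\<close>

text \<open>\<open>F\<close> recovers every edge from the larger rank of its ends, so distinct edges have
  distinct larger ranks.\<close>

lemma forest_ranking_of_underlying_iso:
  fixes \<rho> :: "nat \<Rightarrow> nat" and F :: "nat \<Rightarrow> nat set"
  assumes iso: "underlying_iso Q0 Q1 h t V E"
    and ht: "\<forall>a\<in>Q1. h a \<in> Q0 \<and> t a \<in> Q0"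
    and inj: "inj_on \<rho> V"
    and EF: "\<forall>x y. {x, y} \<in> E \<longrightarrow> x \<noteq> y \<and> {x, y} = F (max (\<rho> x) (\<rho> y))"
  shows "\<exists>\<kappa>. forest_ranking Q1 h t \<kappa>"
proof -
  obtain \<phi> where \<phi>: "bij_betw \<phi> Q0 V" "bij_betw (\<lambda>a. {\<phi> (t a), \<phi> (h a)}) Q1 E"
    using iso unfolding underlying_iso_def by blast
  define \<kappa> where "\<kappa> v = \<rho> (\<phi> v)" for v
  have edge: "\<phi> (t a) \<noteq> \<phi> (h a) \<and> {\<phi> (t a), \<phi> (h a)} = F (max (\<kappa> (t a)) (\<kappa> (h a)))"
    if "a \<in> Q1" for a
    using EF bij_betw_apply[OF \<phi>(2) that] by (simp add: \<kappa>_def)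
  have "\<kappa> (h a) \<noteq> \<kappa> (t a)" if "a \<in> Q1" for a
    using edge[OF that] inj_onD[OF inj] bij_betw_apply[OF \<phi>(1)] ht that
    unfolding \<kappa>_def by fastforce
  moreover have "inj_on (\<lambda>a. max (\<kappa> (h a)) (\<kappa> (t a))) Q1"
  proof (rule inj_onI)
    fix a b assume "a \<in> Q1" "b \<in> Q1" and "max (\<kappa> (h a)) (\<kappa> (t a)) = max (\<kappa> (h b)) (\<kappa> (t b))"
    then have "{\<phi> (t a), \<phi> (h a)} = {\<phi> (t b), \<phi> (h b)}"
      using edge by (metis max.commute)
    then show "a = b"
      using inj_onD[OF bij_betw_imp_inj_on[OF \<phi>(2)]] \<open>a \<in> Q1\<close> \<open>b \<in> Q1\<close> by blast
  qed
  ultimately show ?thesis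
    unfolding forest_ranking_def by blast
qed

text \<open>In \<open>D~_r\<close> the two leaves \<open>0, 1\<close> at the first fork are ranked last; all other
  vertices keep their labels, which already rank the rest of the tree.\<close>

definition Dt_rank :: "nat \<Rightarrow> nat \<Rightarrow> nat" where
  "Dt_rank r x = (if x = 0 then r + 1 else if x = 1 then r + 2 else x)"

definition Dt_edge_of_rank :: "nat \<Rightarrow> nat \<Rightarrow> nat set" where
  "Dt_edge_of_rank r m =
     (if m = r + 1 then {0, 2} else if m = r + 2 then {1, 2} else if m = r then {r - 2, r}
      else {m - 1, m})"

lemma Dt_edges_cases:
  assumes "{x, y} \<in> Dt_edges r"
  obtains "{x, y} = {0, 2}" | "{x, y} = {1, 2}" | "{x, y} = {r - 2, r - 1}" | "{x, y} = {r - 2, r}"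
    | i where "{x, y} = {i, Suc i}" "2 \<le> i" "i < r - 2"
proof -
  have "{x, y} = {0, 2} \<or> {x, y} = {1, 2} \<or> {x, y} = {r - 2, r - 1} \<or> {x, y} = {r - 2, r} \<or>
      (\<exists>i. {x, y} = {i, Suc i} \<and> 2 \<le> i \<and> i < r - 2)"
    using assms unfolding Dt_edges_def
    by (simp only: Un_iff insert_iff mem_Collect_eq empty_iff simp_thms disj_assoc)
  then show thesis
    using that by blast
qed

lemma Dt_edge_eq_edge_of_rank:
  assumes r: "r \<ge> 4" and "{x, y} \<in> Dt_edges r"
  shows "x \<noteq> y \<and> {x, y} = Dt_edge_of_rank r (max (Dt_rank r x) (Dt_rank r y))"
  using assms(2)
proof (cases rule: Dt_edges_cases)
  case 1
  then have "max (Dt_rank r x) (Dt_rank r y) = r + 1"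
    using r by (auto simp: doubleton_eq_iff Dt_rank_def)
  with 1 show ?thesis
    by (auto simp: Dt_edge_of_rank_def doubleton_eq_iff)
next
  case 2
  then have "max (Dt_rank r x) (Dt_rank r y) = r + 2"
    using r by (auto simp: doubleton_eq_iff Dt_rank_def)
  with 2 show ?thesis
    by (auto simp: Dt_edge_of_rank_def doubleton_eq_iff)
next
  case 3
  then have "max (Dt_rank r x) (Dt_rank r y) = r - 1" "x \<noteq> y"
    using r by (auto simp: doubleton_eq_iff Dt_rank_def)
  moreover have "Dt_edge_of_rank r (r - 1) = {r - 2, r - 1}"
  proof -
    have "r - 1 \<noteq> r + 1" "r - 1 \<noteq> r + 2" "r - 1 \<noteq> r" "r - 1 - 1 = r - 2"
      using r by arith+
    then show ?thesis
      unfolding Dt_edge_of_rank_def by presburger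
  qed
  ultimately show ?thesis
    using 3 by simp
next
  case 4
  then have "max (Dt_rank r x) (Dt_rank r y) = r" "x \<noteq> y"
    using r by (auto simp: doubleton_eq_iff Dt_rank_def)
  moreover have "Dt_edge_of_rank r r = {r - 2, r}"
    by (simp add: Dt_edge_of_rank_def)
  ultimately show ?thesis
    using 4 by simp
next
  case (5 i)
  then have "max (Dt_rank r x) (Dt_rank r y) = Suc i" "x \<noteq> y"
    using r by (auto simp: doubleton_eq_iff Dt_rank_def)
  moreover have "Dt_edge_of_rank r (Suc i) = {i, Suc i}"
  proof -
    have "Suc i \<noteq> r + 1" "Suc i \<noteq> r + 2" "Suc i \<noteq> r"
      using 5 by arith+
    then show ?thesis
      unfolding Dt_edge_of_rank_def by simp
  qed
  ultimately show ?thesis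
    using 5 by simp
qed

lemma inj_on_Dt_rank: "inj_on (Dt_rank r) (Dt_vertices r)"
  by (rule inj_onI) (auto simp: Dt_rank_def Dt_vertices_def split: if_splits)

text \<open>In the star \<open>T(p,q,s)\<close> the labels themselves rank the tree: each arm is joined to the
  centre \<open>0\<close> at its first vertex and is a path in increasing order.\<close>

definition star_edge_of_rank :: "nat \<Rightarrow> nat \<Rightarrow> nat \<Rightarrow> nat set" where
  "star_edge_of_rank p q m = (if m = 1 \<or> m = p + 1 \<or> m = p + q + 1 then {0, m} else {m - 1, m})"

lemma arm_edges_cases:
  assumes "{x, y} \<in> arm_edges s l"
  obtains "{x, y} = {0, s}" | i where "{x, y} = {i, Suc i}" "s \<le> i" "i + 1 < s + l"
proof -
  have "{x, y} = {0, s} \<or> (\<exists>i. {x, y} = {i, Suc i} \<and> s \<le> i \<and> i + 1 < s + l)"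
    using assms unfolding arm_edges_def
    by (simp only: Un_iff insert_iff mem_Collect_eq empty_iff simp_thms disj_assoc)
  then show thesis
    using that by blast
qed

lemma arm_edge_eq_star_edge_of_rank:
  assumes "{x, y} \<in> arm_edges s l" and "s = 1 \<or> s = p + 1 \<or> s = p + q + 1"
    and "\<And>i. s \<le> i \<Longrightarrow> i + 1 < s + l \<Longrightarrow> Suc i \<noteq> 1 \<and> Suc i \<noteq> p + 1 \<and> Suc i \<noteq> p + q + 1"
  shows "x \<noteq> y \<and> {x, y} = star_edge_of_rank p q (max x y)"
  using assms(1)
proof (cases rule: arm_edges_cases)
  case 1
  moreover have "s \<noteq> 0"
    using assms(2) by auto
  ultimately have "max x y = s" "x \<noteq> y"
    by (auto simp: doubleton_eq_iff)
  with 1 assms(2) show ?thesis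
    by (auto simp: star_edge_of_rank_def)
next
  case (2 i)
  then have "max x y = Suc i" "x \<noteq> y"
    by (auto simp: doubleton_eq_iff)
  with 2 assms(3)[of i] show ?thesis
    by (simp add: star_edge_of_rank_def)
qed

lemma star_edge_eq_edge_of_rank:
  assumes "p \<ge> 1" and "q \<ge> 1" and "{x, y} \<in> star_edges p q s"
  shows "x \<noteq> y \<and> {x, y} = star_edge_of_rank p q (max x y)"
proof -
  from assms(3) consider "{x, y} \<in> arm_edges 1 p" | "{x, y} \<in> arm_edges (p + 1) q"
    | "{x, y} \<in> arm_edges (p + q + 1) s"
    unfolding star_edges_def by blast
  then show ?thesis
  proof cases
    case 1
    then show ?thesis by (rule arm_edge_eq_star_edge_of_rank) (use assms(1,2) in auto)
  next
    case 2
    then show ?thesis by (rule arm_edge_eq_star_edge_of_rank) (use assms(1,2) in auto)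
  next
    case 3
    then show ?thesis by (rule arm_edge_eq_star_edge_of_rank) (use assms(1,2) in auto)
  qed
qed

lemma forest_ranking_of_Dt:
  assumes "underlying_iso Q0 Q1 h t (Dt_vertices r) (Dt_edges r)" and "r \<ge> 4"
    and "\<forall>a\<in>Q1. h a \<in> Q0 \<and> t a \<in> Q0"
  shows "\<exists>\<kappa>. forest_ranking Q1 h t \<kappa>"
  by (rule forest_ranking_of_underlying_iso[OF assms(1,3) inj_on_Dt_rank, where F = "Dt_edge_of_rank r"])
    (use Dt_edge_eq_edge_of_rank[OF assms(2)] in blast)

lemma forest_ranking_of_star:
  assumes "underlying_iso Q0 Q1 h t (star_vertices p q s) (star_edges p q s)" and "p \<ge> 1" "q \<ge> 1"
    and "\<forall>a\<in>Q1. h a \<in> Q0 \<and> t a \<in> Q0"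
  shows "\<exists>\<kappa>. forest_ranking Q1 h t \<kappa>"
  by (rule forest_ranking_of_underlying_iso[OF assms(1,4) inj_on_id, where F = "star_edge_of_rank p q"])
    (use star_edge_eq_edge_of_rank[OF assms(2,3)] in simp)

lemma affine_DE_forest_ranking:
  assumes "affine_DE Q0 Q1 h t" and "\<forall>a\<in>Q1. h a \<in> Q0 \<and> t a \<in> Q0"
  shows "\<exists>\<kappa>. forest_ranking Q1 h t \<kappa>"
  using assms(1) forest_ranking_of_Dt[OF _ _ assms(2)] forest_ranking_of_star[OF _ _ _ assms(2)]
  unfolding affine_DE_def by fastforce

section \<open>Polynomial functions and the diagonal\<close>

definition shift_diag :: "'e set \<Rightarrow> nat \<Rightarrow> complex \<Rightarrow> ('e \<Rightarrow> nat \<Rightarrow> nat \<Rightarrow> complex) \<Rightarrow>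
    ('e \<Rightarrow> nat \<Rightarrow> nat \<Rightarrow> complex)" where
  "shift_diag Q1 n s A = (\<lambda>a i j. if a \<in> Q1 \<and> i = j \<and> i < n then A a i j + s else A a i j)"

lemma shift_diag_0 [simp]: "shift_diag Q1 n 0 A = A"
  by (auto simp: shift_diag_def fun_eq_iff)

lemma shift_diag_rep_space: "A \<in> rep_space Q1 n \<Longrightarrow> shift_diag Q1 n s A \<in> rep_space Q1 n"
  by (auto simp: rep_space_def shift_diag_def borel_def sqmats_def fun_eq_iff)

lemma diag_part_shift_diag: "diag_part (shift_diag Q1 n s A) = shift_diag Q1 n s (diag_part A)"
  by (auto simp: diag_part_def shift_diag_def fun_eq_iff)

lemma polyfuns_coords_along_shift_diag:
  assumes "f \<in> polyfuns (coords Q1 n)"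
  shows "\<exists>p. \<forall>s. f (shift_diag Q1 n s A) = poly p s"
  using assms
proof (induction rule: polyfuns.induct)
  case (pf_const c)
  show ?case
    by (intro exI[of _ "[:c:]"]) simp
next
  case (pf_gen g)
  then obtain a i j where g: "g = (\<lambda>A. A a i j)" "a \<in> Q1" "j < n"
    unfolding coords_def by blast
  show ?case
  proof (cases "i = j")
    case True
    with g show ?thesis
      by (intro exI[of _ "[:A a i j, 1:]"]) (simp add: shift_diag_def)
  next
    case False
    with g show ?thesis
      by (intro exI[of _ "[:A a i j:]"]) (simp add: shift_diag_def)
  qed
next
  case (pf_add f g)
  then obtain p q where "\<forall>s. f (shift_diag Q1 n s A) = poly p s" "\<forall>s. g (shift_diag Q1 n s A) = poly q s"
    by blast
  then show ?case
    by (intro exI[of _ "p + q"]) simp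
next
  case (pf_mult f g)
  then obtain p q where "\<forall>s. f (shift_diag Q1 n s A) = poly p s" "\<forall>s. g (shift_diag Q1 n s A) = poly q s"
    by blast
  then show ?case
    by (intro exI[of _ "p * q"]) simp
qed

lemma polyfuns_coords_comp_diag_part:
  assumes "f \<in> polyfuns (coords Q1 n)"
  shows "\<exists>g\<in>polyfuns (diag_coords Q1 n). \<forall>A. g A = f (diag_part A)"
  using assms
proof (induction rule: polyfuns.induct)
  case (pf_const c)
  show ?case
    by (intro bexI[of _ "\<lambda>_. c"] polyfuns.pf_const) simp
next
  case (pf_gen g)
  then obtain a i j where g: "g = (\<lambda>A. A a i j)" "a \<in> Q1" "j < n" "i \<le> j"
    unfolding coords_def by blast
  show ?case
  proof (cases "i = j")
    case True
    with g have "(\<lambda>A. A a i i) \<in> diag_coords Q1 n"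
      unfolding diag_coords_def by blast
    with g True show ?thesis
      by (intro bexI[of _ "\<lambda>A. A a i i"] polyfuns.pf_gen) (auto simp: diag_part_def)
  next
    case False
    with g show ?thesis
      by (intro bexI[of _ "\<lambda>_. 0"] polyfuns.pf_const) (auto simp: diag_part_def)
  qed
next
  case (pf_add f g)
  then obtain p q where pq: "p \<in> polyfuns (diag_coords Q1 n)" "q \<in> polyfuns (diag_coords Q1 n)"
    "\<forall>A. p A = f (diag_part A)" "\<forall>A. q A = g (diag_part A)"
    by blast
  show ?case
    by (rule bexI[OF _ polyfuns.pf_add[OF pq(1,2)]]) (simp add: pq(3,4))
next
  case (pf_mult f g)
  then obtain p q where pq: "p \<in> polyfuns (diag_coords Q1 n)" "q \<in> polyfuns (diag_coords Q1 n)"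
    "\<forall>A. p A = f (diag_part A)" "\<forall>A. q A = g (diag_part A)"
    by blast
  show ?case
    by (rule bexI[OF _ polyfuns.pf_mult[OF pq(1,2)]]) (simp add: pq(3,4))
qed

lemma polyfuns_diag_coords_cong:
  assumes "g \<in> polyfuns (diag_coords Q1 n)" and "\<forall>a\<in>Q1. \<forall>i<n. A a i i = B a i i"
  shows "g A = g B"
  using assms by induction (auto simp: diag_coords_def)

text \<open>A polynomial \<open>f\<close> agreeing with \<open>f \<circ> diag_part\<close> wherever the diagonal entries are
  nonzero agrees with it everywhere: along the line \<open>s \<mapsto> A + s\<cdot>1\<close> both sides are
  polynomials in \<open>s\<close> that agree for all but finitely many \<open>s\<close>.\<close>

lemma polyfuns_coords_eq_diag_part_by_density:
  assumes f: "f \<in> polyfuns (coords Q1 n)" and "finite Q1" and A: "A \<in> rep_space Q1 n"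
    and generic: "\<And>B. B \<in> rep_space Q1 n \<Longrightarrow> \<forall>a\<in>Q1. \<forall>i<n. B a i i \<noteq> 0 \<Longrightarrow> f B = f (diag_part B)"
  shows "f A = f (diag_part A)"
proof -
  obtain p where p: "\<forall>s. f (shift_diag Q1 n s A) = poly p s"
    using polyfuns_coords_along_shift_diag[OF f] by blast
  obtain q where q: "\<forall>s. f (shift_diag Q1 n s (diag_part A)) = poly q s"
    using polyfuns_coords_along_shift_diag[OF f] by blast
  define bad where "bad = (\<lambda>(a, i). - A a i i) ` (Q1 \<times> {..<n})"
  have "poly (p - q) s = 0" if "s \<notin> bad" for s
  proof -
    have "\<forall>a\<in>Q1. \<forall>i<n. shift_diag Q1 n s A a i i \<noteq> 0"
      using that by (force simp: bad_def shift_diag_def add_eq_0_iff)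
    then have "f (shift_diag Q1 n s A) = f (shift_diag Q1 n s (diag_part A))"
      using generic[OF shift_diag_rep_space[OF A]] by (simp add: diag_part_shift_diag)
    then show ?thesis
      using p q by simp
  qed
  then have "UNIV \<subseteq> bad \<union> {s. poly (p - q) s = 0}"
    by blast
  moreover have "finite bad"
    using \<open>finite Q1\<close> by (simp add: bad_def)
  ultimately have "p - q = 0"
    using poly_roots_finite infinite_UNIV_char_0 finite_subset by blast
  then show ?thesis
    using p q by (metis shift_diag_0 eq_iff_diff_eq_0)
qed

theorem mainTheorem3:
  fixes Q0 :: "'v set" and Q1 :: "'e set" and h t :: "'e \<Rightarrow> 'v" and n :: nat
  assumes "finite Q0" and "finite Q1"
    and "\<forall>a\<in>Q1. h a \<in> Q0 \<and> t a \<in> Q0"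
    and "affine_DE Q0 Q1 h t"
  shows "\<forall>f \<in> polyfuns (coords Q1 n).
           (\<forall>u\<in>Ugrp Q0 n. \<forall>A\<in>rep_space Q1 n. f (act Q1 h t n u A) = f A)
           \<longleftrightarrow> (\<exists>g \<in> polyfuns (diag_coords Q1 n). \<forall>A\<in>rep_space Q1 n. f A = g A)"
proof (rule ballI, rule iffI)
  fix f assume f: "f \<in> polyfuns (coords Q1 n)"
    and inv: "\<forall>u\<in>Ugrp Q0 n. \<forall>A\<in>rep_space Q1 n. f (act Q1 h t n u A) = f A"
  obtain \<kappa> where "forest_ranking Q1 h t \<kappa>"
    using affine_DE_forest_ranking[OF assms(4,3)] by blast
  then have "f B = f (diag_part B)" if "B \<in> rep_space Q1 n" "\<forall>a\<in>Q1. \<forall>i<n. B a i i \<noteq> 0" for B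
    using forest_gauge_to_diag_part[OF assms(2,3)] inv that by metis
  then have "f A = f (diag_part A)" if "A \<in> rep_space Q1 n" for A
    using polyfuns_coords_eq_diag_part_by_density[OF f assms(2) that] by blast
  moreover obtain g where "g \<in> polyfuns (diag_coords Q1 n)" "\<forall>A. g A = f (diag_part A)"
    using polyfuns_coords_comp_diag_part[OF f] by blast
  ultimately show "\<exists>g \<in> polyfuns (diag_coords Q1 n). \<forall>A\<in>rep_space Q1 n. f A = g A"
    by metis
next
  fix f assume "\<exists>g \<in> polyfuns (diag_coords Q1 n). \<forall>A\<in>rep_space Q1 n. f A = g A"
  then obtain g where g: "g \<in> polyfuns (diag_coords Q1 n)" "\<forall>A\<in>rep_space Q1 n. f A = g A"
    by blast
  show "\<forall>u\<in>Ugrp Q0 n. \<forall>A\<in>rep_space Q1 n. f (act Q1 h t n u A) = f A"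
    using act_rep_space_and_diag[OF _ _ assms(3)] polyfuns_diag_coords_cong[OF g(1)] g(2)
    by metis
qed

end
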